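(* Let $(\mathfrak{g},\langle\cdot,\cdot\rangle)$ be a quadratic Lie algebra and let $(\mathfrak{h},\theta_1,\dots,\theta_k)$ be a $k$-symplectic structure on $\mathfrak{g}$. If $\mathfrak{h}$ is nondegenerate with respect to $\langle\cdot,\cdot\rangle$ (i.e. the restriction of $\langle\cdot,\cdot\rangle$ to $\mathfrak{h}$ is nondegenerate), then the cohomology classes $[\theta_1],\dots,[\theta_k]$ are linearly independent in $H^2(\mathfrak{g})$. In particular, if $k>\dim H^2(\mathfrak{g})$ then $\mathfrak{h}$ is degenerate with respect to $\langle\cdot,\cdot\rangle$.
   Context: A quadratic Lie algebra is a finite-dimensional real Lie algebra $\mathfrak{g}$ endowed with a nondegenerate symmetric bilinear form $\langle\cdot,\cdot\rangle$ which is invariant: $\langle [u,v],w\rangle+\langle [u,w],v\rangle=0$ for all $u,v,w\in\mathfrak{g}$. $H^2(\mathfrak{g})$ denotes the second Chevalley–Eilenberg cohomology group of $\mathfrak{g}$ with trivial real coefficients, and $[\theta]$ the class of a 2-cocycle $\theta$. A $k$-symplectic structure on a real Lie algebra $\mathfrak{g}$ of dimension $n(k+1)$ ($n,k\ge1$) is a pair consisting of a Lie subalgebra $\mathfrak{h}\subset\mathfrak{g}$ of dimension $nk$ and a family $(\theta_1,\dots,\theta_k)$ of skew-symmetric bilinear forms on $\mathfrak{g}$ such that: (i) $\bigcap_{i=1}^k\ker\theta_i=\{0\}$, where $\ker\theta_i=\{u\in\mathfrak{g}:\theta_i(u,v)=0\ \forall v\in\mathfrak{g}\}$; (ii) each $\theta_i$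 is a 2-cocycle: $\theta_i([u,v],w)+\theta_i([v,w],u)+\theta_i([w,u],v)=0$ for all $u,v,w$; (iii) $\theta_i(u,v)=0$ for all $u,v\in\mathfrak{h}$ and all $i$. *)

theory Defs
  imports "HOL-Analysis.Analysis" "HOL-Library.Function_Algebras"
begin

text \<open>A finite-dimensional real Lie algebra is modelled by a bilinear bracket on a
  type of class euclidean_space (any finite-dimensional real vector space).\<close>

definition lie_algebra :: "('a::euclidean_space \<Rightarrow> 'a \<Rightarrow> 'a) \<Rightarrow> bool" where
  "lie_algebra br \<longleftrightarrow> bilinear br \<and> (\<forall>x. br x x = 0) \<and>
     (\<forall>x y z. br x (br y z) + br y (br z x) + br z (br x y) = 0)"

definition quadratic_form :: "('a::euclidean_space \<Rightarrow> 'a \<Rightarrow> 'a) \<Rightarrow> ('a \<Rightarrow> 'a \<Rightarrow> real) \<Rightarrow> bool" where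
  "quadratic_form br B \<longleftrightarrow> bilinear B \<and> (\<forall>u v. B u v = B v u) \<and>
     (\<forall>u. (\<forall>v. B u v = 0) \<longrightarrow> u = 0) \<and>
     (\<forall>u v w. B (br u v) w + B (br u w) v = 0)"

definition quadratic_lie_algebra :: "('a::euclidean_space \<Rightarrow> 'a \<Rightarrow> 'a) \<Rightarrow> ('a \<Rightarrow> 'a \<Rightarrow> real) \<Rightarrow> bool" where
  "quadratic_lie_algebra br B \<longleftrightarrow> lie_algebra br \<and> quadratic_form br B"

definition lie_subalgebra :: "('a::euclidean_space \<Rightarrow> 'a \<Rightarrow> 'a) \<Rightarrow> 'a set \<Rightarrow> bool" where
  "lie_subalgebra br h \<longleftrightarrow> subspace h \<and> (\<forall>u\<in>h. \<forall>v\<in>h. br u v \<in> h)"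

definition skew_form :: "('a::euclidean_space \<Rightarrow> 'a \<Rightarrow> real) \<Rightarrow> bool" where
  "skew_form \<omega> \<longleftrightarrow> bilinear \<omega> \<and> (\<forall>u v. \<omega> u v = - \<omega> v u)"

definition cocycle2 :: "('a::euclidean_space \<Rightarrow> 'a \<Rightarrow> 'a) \<Rightarrow> ('a \<Rightarrow> 'a \<Rightarrow> real) \<Rightarrow> bool" where
  "cocycle2 br \<omega> \<longleftrightarrow> skew_form \<omega> \<and>
     (\<forall>u v w. \<omega> (br u v) w + \<omega> (br v w) u + \<omega> (br w u) v = 0)"

text \<open>Space of 2-cocycles Z2 and of 2-coboundaries B2; a 2-coboundary is
  the differential of a 1-cochain alpha, i.e. (u,v) maps to -alpha([u,v]) (the sign is
  immaterial for the set).\<close>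

definition Z2 :: "('a::euclidean_space \<Rightarrow> 'a \<Rightarrow> 'a) \<Rightarrow> ('a \<Rightarrow> 'a \<Rightarrow> real) set" where
  "Z2 br = {\<omega>. cocycle2 br \<omega>}"

definition B2 :: "('a::euclidean_space \<Rightarrow> 'a \<Rightarrow> 'a) \<Rightarrow> ('a \<Rightarrow> 'a \<Rightarrow> real) set" where
  "B2 br = {\<omega>. \<exists>\<alpha>::'a \<Rightarrow> real. linear \<alpha> \<and> (\<forall>u v. \<omega> u v = - \<alpha> (br u v))}"

definition form_scale :: "real \<Rightarrow> ('a \<Rightarrow> 'a \<Rightarrow> real) \<Rightarrow> ('a \<Rightarrow> 'a \<Rightarrow> real)" where
  "form_scale c \<omega> = (\<lambda>u v. c * \<omega> u v)"

text \<open>dim H^2(g) = dim Z2 - dim B2 (B2 is a subspace of Z2).\<close>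

definition dim_H2 :: "('a::euclidean_space \<Rightarrow> 'a \<Rightarrow> 'a) \<Rightarrow> nat" where
  "dim_H2 br = vector_space.dim form_scale (Z2 br) - vector_space.dim form_scale (B2 br)"

text \<open>The classes [theta_0],...,[theta_(k-1)] are linearly independent in H^2 = Z2/B2:
  a linear combination lies in B2 only if all coefficients vanish.\<close>

definition classes_lin_indep ::
  "('a::euclidean_space \<Rightarrow> 'a \<Rightarrow> 'a) \<Rightarrow> nat \<Rightarrow> (nat \<Rightarrow> 'a \<Rightarrow> 'a \<Rightarrow> real) \<Rightarrow> bool" where
  "classes_lin_indep br k \<theta> \<longleftrightarrow>
     (\<forall>c::nat \<Rightarrow> real. (\<lambda>u v. \<Sum>i<k. c i * \<theta> i u v) \<in> B2 br \<longrightarrow> (\<forall>i<k. c i = 0))"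

definition k_symplectic ::
  "('a::euclidean_space \<Rightarrow> 'a \<Rightarrow> 'a) \<Rightarrow> nat \<Rightarrow> nat \<Rightarrow> 'a set \<Rightarrow> (nat \<Rightarrow> 'a \<Rightarrow> 'a \<Rightarrow> real) \<Rightarrow> bool" where
  "k_symplectic br n k h \<theta> \<longleftrightarrow>
     n \<ge> 1 \<and> k \<ge> 1 \<and> DIM('a) = n * (k + 1) \<and>
     lie_subalgebra br h \<and> dim h = n * k \<and>
     (\<forall>i<k. skew_form (\<theta> i)) \<and>
     (\<forall>u. (\<forall>i<k. \<forall>v. \<theta> i u v = 0) \<longrightarrow> u = 0) \<and>
     (\<forall>i<k. cocycle2 br (\<theta> i)) \<and>
     (\<forall>i<k. \<forall>u\<in>h. \<forall>v\<in>h. \<theta> i u v = 0)"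

definition nondegenerate_on :: "('a::euclidean_space \<Rightarrow> 'a \<Rightarrow> real) \<Rightarrow> 'a set \<Rightarrow> bool" where
  "nondegenerate_on B h \<longleftrightarrow> (\<forall>u\<in>h. (\<forall>v\<in>h. B u v = 0) \<longrightarrow> u = 0)"

end

theory Submission
  imports Defs
begin

text \<open>
  Suppose \<open>\<omega> = \<Sum>\<^sub>i c\<^sub>i \<theta>\<^sub>i\<close> is a coboundary, \<open>\<omega>(u,v) = -\<alpha>([u,v])\<close>, with some \<open>c\<^sub>j \<noteq> 0\<close>.
  Since \<open>dim g = n(k+1)\<close>, \<open>dim h = nk\<close> and the \<open>\<theta>\<^sub>i\<close> have no common kernel, the maps
  \<open>u \<mapsto> \<theta>\<^sub>i(u,-)\<close> embed \<open>h\<close> into \<open>((g/h)\<^sup>*)\<^sup>k\<close> with full dimension, hence onto;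
  consequently \<open>\<omega>(h,x) = 0\<close> forces \<open>x \<in> h\<close>. Writing \<open>\<alpha> = \<langle>a,-\<rangle>\<close>, invariance gives
  \<open>\<omega>(u,v) = \<langle>[u,a],v\<rangle>\<close>; so \<open>\<omega>(h,a) = 0\<close> and \<open>a \<in> h\<close>. As \<open>h\<close> is a subalgebra on which
  \<open>\<omega>\<close> vanishes and \<open>\<langle>-,-\<rangle>\<close> is nondegenerate, \<open>[h,a] = 0\<close>, i.e. \<open>\<omega>(h,g) = 0\<close>, which
  forces \<open>h = g\<close>: a contradiction. Classes independent modulo \<open>B\<^sup>2\<close> extend a basis of
  \<open>B\<^sup>2\<close> inside \<open>Z\<^sup>2\<close>, which gives the dimension bound.
\<close>

lemma linear_eq_inner_Basis_sum:
  fixes g :: "'a::euclidean_space \<Rightarrow> real"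
  assumes "linear g"
  shows "g v = (\<Sum>b\<in>Basis. g b *\<^sub>R b) \<bullet> v"
proof -
  have "g v = g (\<Sum>b\<in>Basis. (v \<bullet> b) *\<^sub>R b)" by (simp add: euclidean_representation)
  also have "\<dots> = (\<Sum>b\<in>Basis. (v \<bullet> b) * g b)"
    using assms by (simp add: linear_sum linear_scale o_def)
  also have "\<dots> = (\<Sum>b\<in>Basis. g b *\<^sub>R b) \<bullet> v"
    by (simp add: inner_sum_left inner_commute[of _ v] inner_sum_right mult.commute)
  finally show ?thesis .
qed

definition left_rep :: "('a::euclidean_space \<Rightarrow> 'a \<Rightarrow> real) \<Rightarrow> 'a \<Rightarrow> 'a" where
  "left_rep \<omega> u = (\<Sum>b\<in>Basis. \<omega> u b *\<^sub>R b)"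

lemma inner_left_rep:
  assumes "bilinear \<omega>"
  shows "left_rep \<omega> u \<bullet> v = \<omega> u v"
  using assms linear_eq_inner_Basis_sum[of "\<omega> u" v]
  by (simp add: left_rep_def bilinear_def)

lemma linear_left_rep:
  assumes "bilinear \<omega>"
  shows "linear (left_rep \<omega>)"
  unfolding left_rep_def
  by (rule linearI) (simp_all add: bilinear_ladd[OF assms] bilinear_lmul[OF assms]
      scaleR_add_left sum.distrib scaleR_sum_right)

lemma nondegenerate_bilinear_represents_linear:
  fixes B :: "'a::euclidean_space \<Rightarrow> 'a \<Rightarrow> real"
  assumes B: "bilinear B" and nondeg: "\<forall>u. (\<forall>v. B u v = 0) \<longrightarrow> u = 0"
    and \<alpha>: "linear \<alpha>"
  obtains a where "\<And>x. \<alpha> x = B a x"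
proof -
  have "inj (left_rep B)"
    using nondeg inner_left_rep[OF B]
    by (simp add: linear_injective_0[OF linear_left_rep[OF B]]) (metis inner_zero_left)
  then have "surj (left_rep B)"
    using linear_injective_imp_surjective[OF linear_left_rep[OF B]] by simp
  then obtain a where "left_rep B a = (\<Sum>b\<in>Basis. \<alpha> b *\<^sub>R b)" by (metis surjD)
  then have "\<alpha> x = B a x" for x
    using linear_eq_inner_Basis_sum[OF \<alpha>] inner_left_rep[OF B] by metis
  then show thesis by (rule that)
qed

lemma dim_le_dim_kernel_add_dim_image:
  fixes f :: "'a::euclidean_space \<Rightarrow> 'b::euclidean_space"
  assumes f: "linear f" and V: "subspace V"
  shows "dim V \<le> dim {u \<in> V. f u = 0} + dim (f ` V)"
proof -
  define K where "K = {u \<in> V. f u = 0}"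
  define C where "C = {y \<in> V. \<forall>x\<in>K. orthogonal x y}"
  have K: "subspace K" "K \<subseteq> V"
    unfolding K_def using V f
    by (auto simp: subspace_def linear_add linear_scale linear_0)
  have C: "subspace C"
    unfolding C_def using V by (auto simp: subspace_def orthogonal_clauses)
  have dimC: "dim C + dim K = dim V"
    unfolding C_def by (rule dim_subspace_orthogonal_to_vectors[OF K(1) V K(2)])
  have "inj_on f C"
  proof (subst linear_injective_on_subspace_0[OF f C], intro ballI impI)
    fix y assume "y \<in> C" "f y = 0"
    then have "orthogonal y y" unfolding C_def K_def by auto
    then show "y = 0" by (simp add: orthogonal_def)
  qed
  then have "dim (f ` C) = dim C"
    using dim_image_eq[OF f] C by (metis span_eq_iff)
  moreover have "dim (f ` C) \<le> dim (f ` V)"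
    by (rule dim_subset) (auto simp: C_def)
  ultimately show ?thesis using dimC unfolding K_def by linarith
qed

lemma dim_le_dim_joint_kernel_add:
  fixes L :: "'i \<Rightarrow> 'a::euclidean_space \<Rightarrow> 'b::euclidean_space"
  assumes "finite S" and V: "subspace V"
    and lin: "\<And>i. i \<in> S \<Longrightarrow> linear (L i)" and into: "\<And>i. i \<in> S \<Longrightarrow> L i ` V \<subseteq> W"
  shows "dim V \<le> dim {u \<in> V. \<forall>i\<in>S. L i u = 0} + card S * dim W"
  using assms(1) lin into
proof (induction S rule: finite_induct)
  case empty
  then show ?case by simp
next
  case (insert j S)
  define K where "K = {u \<in> V. \<forall>i\<in>S. L i u = 0}"
  have K: "subspace K"
    unfolding K_def using V insert.prems(1)
    by (auto simp: subspace_def linear_add linear_scale linear_0)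
  have "dim K \<le> dim {u \<in> K. L j u = 0} + dim (L j ` K)"
    using dim_le_dim_kernel_add_dim_image[OF insert.prems(1) K] by simp
  also have "{u \<in> K. L j u = 0} = {u \<in> V. \<forall>i\<in>insert j S. L i u = 0}"
    unfolding K_def by auto
  also have "dim (L j ` K) \<le> dim W"
    using insert.prems(2)[of j] unfolding K_def by (intro dim_subset) auto
  finally show ?case
    using insert unfolding K_def by simp
qed

text \<open>On the joint kernel \<open>K\<close> of all \<open>L i\<close> with \<open>i \<noteq> j\<close> the map \<open>L j\<close> is injective,
  and the dimension count forces \<open>dim K \<ge> dim W\<close>; so \<open>L j\<close> maps \<open>K\<close> onto \<open>W\<close>.\<close>

lemma jointly_injective_combination_onto:
  fixes L :: "nat \<Rightarrow> 'a::euclidean_space \<Rightarrow> 'b::euclidean_space"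
  assumes V: "subspace V" and W: "subspace W"
    and lin: "\<And>i. i < k \<Longrightarrow> linear (L i)" and into: "\<And>i. i < k \<Longrightarrow> L i ` V \<subseteq> W"
    and joint_inj: "\<And>u. u \<in> V \<Longrightarrow> \<forall>i<k. L i u = 0 \<Longrightarrow> u = 0"
    and dimV: "dim V = k * dim W"
    and j: "j < k" "c j \<noteq> 0" and z: "z \<in> W"
  obtains u where "u \<in> V" "(\<Sum>i<k. c i *\<^sub>R L i u) = z"
proof -
  define K where "K = {u \<in> V. \<forall>i\<in>{..<k} - {j}. L i u = 0}"
  have K: "subspace K"
    unfolding K_def using V lin
    by (auto simp: subspace_def linear_add linear_scale linear_0)
  have "dim V \<le> dim K + (k - 1) * dim W"
    using dim_le_dim_joint_kernel_add[OF _ V, of "{..<k} - {j}" L W] lin into j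
    unfolding K_def by simp
  moreover have "k * dim W = (k - 1) * dim W + dim W"
    using j by (cases k) auto
  ultimately have dimK: "dim W \<le> dim K" using dimV by linarith
  have "inj_on (L j) K"
  proof (subst linear_injective_on_subspace_0[OF lin[OF j(1)] K], intro ballI impI)
    fix u assume "u \<in> K" "L j u = 0"
    then have "\<forall>i<k. L i u = 0" unfolding K_def by auto
    with \<open>u \<in> K\<close> show "u = 0" using joint_inj unfolding K_def by blast
  qed
  then have "dim (L j ` K) = dim K"
    using dim_image_eq[OF lin[OF j(1)]] K by (metis span_eq_iff)
  then have "L j ` K = W"
    using subspace_dim_equal[OF linear_subspace_image[OF lin[OF j(1)] K] W] into[OF j(1)]
      dimK unfolding K_def by force
  then obtain u where u: "u \<in> K" "L j u = z /\<^sub>R c j"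
    using z W by (metis imageE subspace_scale)
  have "(\<Sum>i<k. c i *\<^sub>R L i u) = (\<Sum>i\<in>{j}. c i *\<^sub>R L i u)"
    by (rule sum.mono_neutral_right) (use u(1) j(1) in \<open>auto simp: K_def\<close>)
  also have "\<dots> = z" using u(2) j(2) by simp
  finally show thesis using u(1) that unfolding K_def by blast
qed

text \<open>The dual of \<open>g/h\<close> is realised as the orthogonal complement \<open>W\<close> of \<open>h\<close>, in which
  \<open>left_rep (\<theta> i) u\<close> represents \<open>\<theta>\<^sub>i(u,-)\<close> for \<open>u \<in> h\<close>.\<close>

lemma k_symplectic_combination_annihilator_subset:
  assumes ks: "k_symplectic br n k h \<theta>" and j: "j < k" "c j \<noteq> 0"
    and annihil: "\<And>u. u \<in> h \<Longrightarrow> (\<Sum>i<k. c i * \<theta> i u x) = 0"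
  shows "x \<in> h"
proof -
  have h: "subspace h" and dim_h: "dim h = n * k" and DIM: "DIM('a) = n * (k + 1)"
    and skew: "\<forall>i<k. skew_form (\<theta> i)"
    and ker: "\<forall>u. (\<forall>i<k. \<forall>v. \<theta> i u v = 0) \<longrightarrow> u = 0"
    and isotropic: "\<forall>i<k. \<forall>u\<in>h. \<forall>v\<in>h. \<theta> i u v = 0"
    using ks unfolding k_symplectic_def lie_subalgebra_def by blast+
  have bil: "bilinear (\<theta> i)" if "i < k" for i
    using skew that by (simp add: skew_form_def)
  have dimh: "dim h = k * n" using dim_h by (simp add: mult.commute)
  define W where "W = {y. \<forall>x\<in>h. orthogonal x y}"
  have W: "subspace W" unfolding W_def by (rule subspace_orthogonal_to_vectors)
  have "dim {y \<in> UNIV. \<forall>x\<in>h. orthogonal x y} + dim h = dim (UNIV :: 'a set)"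
    using h by (intro dim_subspace_orthogonal_to_vectors) auto
  then have dimW: "dim W = n" unfolding W_def using dimh DIM by simp
  have rep: "\<theta> i u v = left_rep (\<theta> i) u \<bullet> v" if "i < k" for i u v
    using inner_left_rep[OF bil[OF that]] by simp
  have into: "left_rep (\<theta> i) ` h \<subseteq> W" if "i < k" for i
    using isotropic rep that by (auto simp: W_def orthogonal_def inner_commute)
  have joint_inj: "u = 0" if "\<forall>i<k. left_rep (\<theta> i) u = 0" for u
  proof -
    have "\<forall>i<k. \<forall>v. \<theta> i u v = 0" using rep that by simp
    then show ?thesis using ker by blast
  qed
  have span_h: "span h = h" using h by (simp add: span_eq_iff)
  obtain y z where y: "y \<in> h" and z: "\<And>w. w \<in> h \<Longrightarrow> orthogonal z w"
    and x: "x = y + z"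
    using orthogonal_subspace_decomp_exists[of h x] unfolding span_h by blast
  have zW: "z \<in> W" using z by (simp add: W_def span_h orthogonal_commute)
  obtain u where u: "u \<in> h" "(\<Sum>i<k. c i *\<^sub>R left_rep (\<theta> i) u) = z"
    by (rule jointly_injective_combination_onto[of h W k "\<lambda>i. left_rep (\<theta> i)" j c z])
      (use h W linear_left_rep[OF bil] into joint_inj j zW dimh dimW in auto)
  have "0 = (\<Sum>i<k. c i * \<theta> i u x)" using annihil[OF u(1)] by simp
  also have "\<dots> = (\<Sum>i<k. c i *\<^sub>R left_rep (\<theta> i) u) \<bullet> x"
    by (simp add: rep inner_sum_left)
  also have "\<dots> = z \<bullet> z"
    using u(2) z[OF y] x by (simp add: inner_add_right orthogonal_def)
  finally have "z = 0" by simp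
  then show ?thesis using x y by simp
qed

lemma k_symplectic_classes_lin_indep:
  assumes q: "quadratic_lie_algebra br B" and ks: "k_symplectic br n k h \<theta>"
    and nd: "nondegenerate_on B h"
  shows "classes_lin_indep br k \<theta>"
  unfolding classes_lin_indep_def
proof (rule allI, rule impI)
  fix c :: "nat \<Rightarrow> real"
  assume "(\<lambda>u v. \<Sum>i<k. c i * \<theta> i u v) \<in> B2 br"
  then obtain \<alpha> :: "'a \<Rightarrow> real" where \<alpha>: "linear \<alpha>"
    and cobound: "\<And>u v. (\<Sum>i<k. c i * \<theta> i u v) = - \<alpha> (br u v)"
    unfolding B2_def by auto
  have B: "bilinear B" and symm: "\<And>u v. B u v = B v u"
    and nondeg: "\<forall>u. (\<forall>v. B u v = 0) \<longrightarrow> u = 0"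
    and invariant: "\<And>u v w. B (br u v) w + B (br u w) v = 0"
    using q unfolding quadratic_lie_algebra_def quadratic_form_def by blast+
  obtain a where a: "\<And>x. \<alpha> x = B a x"
    using nondegenerate_bilinear_represents_linear[OF B nondeg \<alpha>] by blast
  have \<omega>: "(\<Sum>i<k. c i * \<theta> i u v) = B (br u a) v" for u v
    using cobound[of u v] a[of "br u v"] symm[of a] invariant[of u v a] by simp
  have subalg: "\<And>u v. u \<in> h \<Longrightarrow> v \<in> h \<Longrightarrow> br u v \<in> h"
    and isotropic: "\<forall>i<k. \<forall>u\<in>h. \<forall>v\<in>h. \<theta> i u v = 0"
    and dims: "n \<ge> 1" "dim h = n * k" "DIM('a) = n * (k + 1)"
    using ks unfolding k_symplectic_def lie_subalgebra_def by blast+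
  show "\<forall>i<k. c i = 0"
  proof (rule ccontr)
    assume "\<not> (\<forall>i<k. c i = 0)"
    then obtain j where j: "j < k" "c j \<noteq> 0" by blast
    have "B (br u a) a = 0" for u using invariant[of u a a] by simp
    then have a_h: "a \<in> h"
      using k_symplectic_combination_annihilator_subset[where c = c, OF ks j] \<omega> by simp
    have "br u a = 0" if u: "u \<in> h" for u
    proof -
      have "B (br u a) v = 0" if "v \<in> h" for v
        using \<omega>[of u v] isotropic u that by simp
      then show ?thesis using nd subalg[OF u a_h] unfolding nondegenerate_on_def by blast
    qed
    then have "x \<in> h" for x
      using k_symplectic_combination_annihilator_subset[where c = c, OF ks j] \<omega> bilinear_lzero[OF B]
      by simp
    then have "h = UNIV" by blast
    then have "dim h = DIM('a)" by simp
    then show False using dims by simp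
  qed
qed

context vector_space
begin

lemma independent_mod_inj_on_disjoint:
  fixes x :: "nat \<Rightarrow> 'b"
  assumes U: "subspace U"
    and indep: "\<And>c. (\<Sum>i<k. c i *s x i) \<in> U \<Longrightarrow> \<forall>i<k. c i = 0"
  shows "inj_on x {..<k}" and "U \<inter> x ` {..<k} = {}"
proof -
  have single: "(\<Sum>l<k. (if l = i then a else 0) *s x l) = a *s x i" if "i < k" for i a
  proof -
    have "(\<Sum>l<k. (if l = i then a else 0) *s x l) = (\<Sum>l<k. if l = i then a *s x i else 0)"
      by (rule sum.cong) auto
    then show ?thesis using that by simp
  qed
  show "inj_on x {..<k}"
  proof (rule inj_onI, rule ccontr)
    fix i j assume ij: "i \<in> {..<k}" "j \<in> {..<k}" "x i = x j" "i \<noteq> j"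
    have "(\<Sum>l<k. ((if l = i then 1 else 0) - (if l = j then 1 else 0)) *s x l) = 0"
      using ij single[of i 1] single[of j 1] by (simp add: scale_left_diff_distrib sum_subtractf)
    then show False using indep[of "\<lambda>l. (if l = i then 1 else 0) - (if l = j then 1 else 0)"]
      subspace_0[OF U] ij by auto
  qed
  show "U \<inter> x ` {..<k} = {}"
  proof (rule ccontr)
    assume "U \<inter> x ` {..<k} \<noteq> {}"
    then obtain i where "i < k" "x i \<in> U" by auto
    then show False using indep[of "\<lambda>l. if l = i then 1 else 0"] single by auto
  qed
qed

lemma independent_Un_image_of_independent_mod:
  fixes x :: "nat \<Rightarrow> 'b"
  assumes U: "subspace U" and BU: "independent BU" "BU \<subseteq> U" "finite BU"
    and indep: "\<And>c. (\<Sum>i<k. c i *s x i) \<in> U \<Longrightarrow> \<forall>i<k. c i = 0"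
  shows "independent (BU \<union> x ` {..<k})" and "card (BU \<union> x ` {..<k}) = card BU + k"
proof -
  have inj: "inj_on x {..<k}" by (rule independent_mod_inj_on_disjoint(1)[OF U indep])
  have disj: "BU \<inter> x ` {..<k} = {}"
    using independent_mod_inj_on_disjoint(2)[OF U indep] BU(2) by blast
  show "card (BU \<union> x ` {..<k}) = card BU + k"
    using card_Un_disjoint[OF BU(3) _ disj] card_image[OF inj] by simp
  show "independent (BU \<union> x ` {..<k})"
  proof (rule independent_if_scalars_zero)
    show "finite (BU \<union> x ` {..<k})" using BU(3) by simp
  next
    fix f y assume sum0: "(\<Sum>v\<in>BU \<union> x ` {..<k}. f v *s v) = 0" and y: "y \<in> BU \<union> x ` {..<k}"
    define P where "P = (\<Sum>v\<in>BU. f v *s v)"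
    have "P + (\<Sum>i<k. f (x i) *s x i) = 0"
      using sum0 sum.union_disjoint[OF BU(3) _ disj, of "\<lambda>v. f v *s v"]
        sum.reindex[OF inj, of "\<lambda>v. f v *s v"]
      unfolding P_def by (simp add: o_def)
    moreover have "P \<in> U"
      unfolding P_def
      by (rule subsetD[OF span_minimal[OF BU(2) U]]) (intro span_sum span_scale span_base)
    ultimately have "(\<Sum>i<k. f (x i) *s x i) \<in> U"
      using subspace_neg[OF U] by (metis add.commute eq_neg_iff_add_eq_0)
    then have fx: "\<forall>i<k. f (x i) = 0" by (rule indep)
    show "f y = 0"
    proof (cases "y \<in> BU")
      case True
      have "P = 0" using \<open>P + _ = 0\<close> fx by simp
      show ?thesis
      proof (rule ccontr)
        assume "f y \<noteq> 0"
        then have "dependent BU"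
          using True \<open>P = 0\<close> unfolding dependent_finite[OF BU(3)] P_def
          by (intro exI[of _ f]) auto
        then show False using BU(1) by simp
      qed
    next
      case False
      then show ?thesis using y fx by auto
    qed
  qed
qed

lemma dim_add_le_dim_of_independent_mod:
  fixes x :: "nat \<Rightarrow> 'b"
  assumes U: "subspace U" "U \<subseteq> W" and G: "finite G" "W \<subseteq> span G"
    and x: "\<And>i. i < k \<Longrightarrow> x i \<in> W"
    and indep: "\<And>c. (\<Sum>i<k. c i *s x i) \<in> U \<Longrightarrow> \<forall>i<k. c i = 0"
  shows "dim U + k \<le> dim W"
proof -
  obtain BU where BU: "BU \<subseteq> U" "independent BU" "U \<subseteq> span BU" "card BU = dim U"
    by (rule basis_exists)
  obtain BW where BW: "BW \<subseteq> W" "independent BW" "W \<subseteq> span BW" "card BW = dim W"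
    by (rule basis_exists)
  have "BU \<subseteq> span G" "BW \<subseteq> span G" using BU(1) BW(1) U(2) G(2) by blast+
  then have fin: "finite BU" "finite BW"
    using independent_span_bound[OF G(1)] BU(2) BW(2) by blast+
  have "BU \<union> x ` {..<k} \<subseteq> span BW" using BU(1) U(2) x BW(3) by blast
  then have "card (BU \<union> x ` {..<k}) \<le> card BW"
    using independent_span_bound[OF fin(2)]
      independent_Un_image_of_independent_mod(1)[OF U(1) BU(2,1) fin(1) indep] by blast
  then show ?thesis
    using independent_Un_image_of_independent_mod(2)[OF U(1) BU(2,1) fin(1) indep] BU(4) BW(4)
    by simp
qed

end

lemma sum_fun_apply: "(\<Sum>i\<in>A. f i) x = (\<Sum>i\<in>A. f i x)"
  for f :: "'i \<Rightarrow> 'x \<Rightarrow> 'b::comm_monoid_add"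
  by (induction A rule: infinite_finite_induct) auto

interpretation form: vector_space "form_scale :: real \<Rightarrow> ('a \<Rightarrow> 'a \<Rightarrow> real) \<Rightarrow> _"
  by unfold_locales (auto simp: form_scale_def fun_eq_iff algebra_simps)

lemma sum_form_scale_eq: "(\<Sum>i\<in>A. form_scale (c i) (\<theta> i)) = (\<lambda>u v. \<Sum>i\<in>A. c i * \<theta> i u v)"
  by (simp add: form_scale_def sum_fun_apply fun_eq_iff)

text \<open>All forms on \<open>'a\<close> make up an infinite-dimensional space, in which \<open>dim\<close> of a set with
  no finite basis is the junk value \<open>0\<close>; the elementary forms below finitely span \<open>Z\<^sup>2\<close>.\<close>

definition elementary_forms :: "('a::euclidean_space \<Rightarrow> 'a \<Rightarrow> real) set" where
  "elementary_forms = (\<lambda>(b, b') u v. (b \<bullet> u) * (b' \<bullet> v)) ` (Basis \<times> Basis)"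

lemma finite_elementary_forms: "finite elementary_forms"
  by (simp add: elementary_forms_def)

lemma bilinear_in_span_elementary_forms:
  assumes \<omega>: "bilinear \<omega>"
  shows "\<omega> \<in> form.span elementary_forms"
proof -
  let ?e = "\<lambda>(b, b') u v. (b \<bullet> u) * (b' \<bullet> v) :: real"
  have expansion: "\<omega> u v = (\<Sum>p\<in>Basis \<times> Basis. \<omega> (fst p) (snd p) * ?e p u v)" for u v
  proof -
    have "\<omega> u v = \<omega> (\<Sum>b\<in>Basis. (u \<bullet> b) *\<^sub>R b) (\<Sum>b'\<in>Basis. (v \<bullet> b') *\<^sub>R b')"
      by (simp add: euclidean_representation)
    also have "\<dots> = (\<Sum>(b, b')\<in>Basis \<times> Basis. \<omega> ((u \<bullet> b) *\<^sub>R b) ((v \<bullet> b') *\<^sub>R b'))"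
      by (rule bilinear_sum[OF \<omega>])
    also have "\<dots> = (\<Sum>p\<in>Basis \<times> Basis. \<omega> (fst p) (snd p) * ?e p u v)"
      by (intro sum.cong)
        (auto simp: bilinear_lmul[OF \<omega>] bilinear_rmul[OF \<omega>] inner_commute mult_ac)
    finally show ?thesis .
  qed
  have "\<omega> = (\<Sum>p\<in>Basis \<times> Basis. form_scale (\<omega> (fst p) (snd p)) (?e p))"
    unfolding sum_form_scale_eq by (intro ext) (rule expansion)
  also have "\<dots> \<in> form.span elementary_forms"
    unfolding elementary_forms_def by (intro form.span_sum form.span_scale form.span_base) auto
  finally show ?thesis .
qed

lemma Z2_subset_span_elementary_forms: "Z2 br \<subseteq> form.span elementary_forms"
  by (auto simp: Z2_def cocycle2_def skew_form_def intro: bilinear_in_span_elementary_forms)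

lemma form_subspace_B2: "form.subspace (B2 br)"
  unfolding form.subspace_def
proof (intro conjI ballI allI)
  show "0 \<in> B2 br" unfolding B2_def by (auto intro!: exI[of _ "\<lambda>_. 0"] simp: linear_zero)
next
  fix \<omega> \<omega>' assume "\<omega> \<in> B2 br" "\<omega>' \<in> B2 br"
  then obtain \<alpha> \<alpha>' :: "'a \<Rightarrow> real" where "linear \<alpha>" "\<forall>u v. \<omega> u v = - \<alpha> (br u v)"
    "linear \<alpha>'" "\<forall>u v. \<omega>' u v = - \<alpha>' (br u v)" unfolding B2_def by auto
  then show "\<omega> + \<omega>' \<in> B2 br" unfolding B2_def
    by (auto intro!: exI[of _ "\<lambda>w. \<alpha> w + \<alpha>' w"] linear_compose_add)
next
  fix c :: real and \<omega> assume "\<omega> \<in> B2 br"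
  then obtain \<alpha> :: "'a \<Rightarrow> real" where "linear \<alpha>" "\<forall>u v. \<omega> u v = - \<alpha> (br u v)"
    unfolding B2_def by auto
  moreover have "linear (\<lambda>w. c * \<alpha> w)"
    by (rule linearI) (simp_all add: linear_add[OF \<open>linear \<alpha>\<close>] linear_scale[OF \<open>linear \<alpha>\<close>]
        algebra_simps)
  ultimately show "form_scale c \<omega> \<in> B2 br" unfolding B2_def form_scale_def
    by (auto intro!: exI[of _ "\<lambda>w. c * \<alpha> w"])
qed

lemma lie_bracket_antisym:
  assumes "lie_algebra br"
  shows "br u v = - br v u"
proof -
  have br: "bilinear br" and alt: "\<And>x. br x x = 0"
    using assms unfolding lie_algebra_def by auto
  have "br (u + v) (u + v) = br u u + br u v + (br v u + br v v)"
    by (simp add: bilinear_ladd[OF br] bilinear_radd[OF br])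
  then have "br u v + br v u = 0" using alt by simp
  then show ?thesis by (simp add: eq_neg_iff_add_eq_0)
qed

lemma B2_subset_Z2:
  assumes lie: "lie_algebra br"
  shows "B2 br \<subseteq> Z2 br"
proof
  fix \<omega> assume "\<omega> \<in> B2 br"
  then obtain \<alpha> :: "'a \<Rightarrow> real" where \<alpha>: "linear \<alpha>" and \<omega>: "\<omega> = (\<lambda>u v. - \<alpha> (br u v))"
    unfolding B2_def by fastforce
  have br: "bilinear br" and jacobi: "\<And>x y z. br x (br y z) + br y (br z x) + br z (br x y) = 0"
    using lie unfolding lie_algebra_def by auto
  have "linear (br u)" "linear (\<lambda>v. br v u)" for u
    using br unfolding bilinear_def by auto
  then have "linear (\<lambda>v. - \<alpha> (br u v))" "linear (\<lambda>v. - \<alpha> (br v u))" for u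
    using linear_compose_neg[OF linear_compose[OF _ \<alpha>]] unfolding o_def by blast+
  then have "bilinear \<omega>" unfolding \<omega> bilinear_def by blast
  moreover have "\<omega> u v = - \<omega> v u" for u v
    using lie_bracket_antisym[OF lie, of u v] unfolding \<omega> by (simp add: linear_neg[OF \<alpha>])
  moreover have "\<omega> (br u v) w + \<omega> (br v w) u + \<omega> (br w u) v = 0" for u v w
  proof -
    have "\<omega> (br u v) w + \<omega> (br v w) u + \<omega> (br w u) v
        = - \<alpha> (br (br u v) w + br (br v w) u + br (br w u) v)"
      unfolding \<omega> by (simp add: linear_add[OF \<alpha>])
    also have "br (br u v) w + br (br v w) u + br (br w u) v
        = - (br w (br u v) + br u (br v w) + br v (br w u))"
      using lie_bracket_antisym[OF lie, of "br u v" w] lie_bracket_antisym[OF lie, of "br v w" u]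
        lie_bracket_antisym[OF lie, of "br w u" v] by simp
    also have "\<dots> = 0" using jacobi by simp
    finally show ?thesis using linear_0[OF \<alpha>] by simp
  qed
  ultimately show "\<omega> \<in> Z2 br" unfolding Z2_def cocycle2_def skew_form_def by blast
qed

lemma dim_B2_add_le_dim_Z2:
  assumes lie: "lie_algebra br" and cocycles: "\<And>i. i < k \<Longrightarrow> \<theta> i \<in> Z2 br"
    and indep: "classes_lin_indep br k \<theta>"
  shows "form.dim (B2 br) + k \<le> form.dim (Z2 br)"
  by (rule form.dim_add_le_dim_of_independent_mod[OF form_subspace_B2 B2_subset_Z2[OF lie]
        finite_elementary_forms Z2_subset_span_elementary_forms cocycles])
    (use indep in \<open>auto simp: sum_form_scale_eq classes_lin_indep_def\<close>)

theorem mainTheorem4: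
  fixes br :: "'a::euclidean_space \<Rightarrow> 'a \<Rightarrow> 'a"
    and B :: "'a \<Rightarrow> 'a \<Rightarrow> real"
    and n k :: nat
    and h :: "'a set"
    and \<theta> :: "nat \<Rightarrow> 'a \<Rightarrow> 'a \<Rightarrow> real"
  assumes "quadratic_lie_algebra br B"
    and "k_symplectic br n k h \<theta>"
    and "nondegenerate_on B h"
  shows "classes_lin_indep br k \<theta> \<and> k \<le> dim_H2 br"
proof -
  have indep: "classes_lin_indep br k \<theta>"
    using k_symplectic_classes_lin_indep[OF assms] .
  have lie: "lie_algebra br"
    using assms(1) by (simp add: quadratic_lie_algebra_def)
  have "\<theta> i \<in> Z2 br" if "i < k" for i
    using assms(2) that unfolding k_symplectic_def Z2_def by blast
  then have "form.dim (B2 br) + k \<le> form.dim (Z2 br)"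
    using dim_B2_add_le_dim_Z2[OF lie _ indep] by blast
  then show ?thesis using indep by (simp add: dim_H2_def)
qed

end
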